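(* Let $V$ be a finite set of variables and let $(\mathit{base}_0, \mathit{stay}_0, \mathit{step}_0, \mathit{conc}_0)$ and $(\mathit{base}_1, \mathit{stay}_1, \mathit{step}_1, \mathit{conc}_1)$ be generalized acceleration lemmas (GALs) over $V$. Define $\mathit{step} := \mathit{step}_0 \lor (\mathit{conc}_1 \land \lnot \mathit{base}_1 \land \mathit{step}_1 \land \mathit{stay}_0)$ and $\mathit{stay} := \mathit{stay}_0 \land \mathit{stay}_1 \land (\mathit{base}_1 \to \mathit{base}_1[V \mapsto V'])$. Then the tuple $(\mathit{base}_0, \mathit{stay}, \mathit{step}, \mathit{conc}_0)$ is also a GAL over $V$.
   Context: Fix a first-order theory $T$. For a set of variables $X$, $\mathcal{A}(X)$ denotes the set of assignments $\nu: X \to \mathcal{V}$ (values). $X' = \{x' \mid x \in X\}$ is a disjoint primed copy of $X$; for $\nu \in \mathcal{A}(X)$, $\nu' \in \mathcal{A}(X')$ is given by $\nu'(x') = \nu(x)$; for $\nu_1,\nu_2 \in \mathcal{A}(X)$, $\langle \nu_1,\nu_2\rangle := \nu_1 \uplus \nu_2'$. $\nu \models_T \alpha$ denotes entailment in $T$. For a formula $\alpha$, $\alpha[V\mapsto V']$ is the result of replacing each $v\in V$ simultaneously by $v'$. A generalized acceleration lemma (GAL) over $V$ is a tuple $(\mathit{base}, \mathit{stay}, \mathit{step}, \mathit{conc})$ of first-order formulas with $\mathit{base}, \mathit{conc}$ having free variables in $V$ and $\mathit{stay}, \mathit{step}$ having free variables in $V \cup V'$, such that: (I) for every sequence $\alpha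 \in \mathcal{A}(V)^\omega$ with $\alpha[0] \models_T \mathit{conc}$, if (a) for all $i$, $\langle\alpha[i],\alpha[i+1]\rangle \models_T \mathit{step} \lor \mathit{stay}$, and (b) for all $i$ there is $j \ge i$ with $\langle\alpha[j],\alpha[j+1]\rangle \models_T \mathit{step}$, then there is $k$ with $\alpha[k] \models_T \mathit{base}$; and (II) for all $\nu,\nu' \in \mathcal{A}(V)$ with $\nu \models_T \mathit{conc}$ and $\langle \nu,\nu'\rangle \models_T \mathit{step}\lor\mathit{stay}$, we have $\nu' \models_T \mathit{conc}$. *)

theory Defs
  imports Main
begin

text \<open>Variables form a finite type 'x (so V = UNIV), values a type 'v. A formula with free variables in V is
  represented by its satisfaction predicate on assignments (nu |=_T alpha); a formula with
  free variables in V and V' by a predicate on pairs (nu1, nu2), standing for <nu1,nu2>.\<close>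

type_synonym ('x, 'v) assignment = "'x \<Rightarrow> 'v"
type_synonym ('x, 'v) sform = "('x, 'v) assignment \<Rightarrow> bool"
type_synonym ('x, 'v) tform = "('x, 'v) assignment \<Rightarrow> ('x, 'v) assignment \<Rightarrow> bool"

definition is_GAL ::
  "('x::finite, 'v) sform \<Rightarrow> ('x, 'v) tform \<Rightarrow> ('x, 'v) tform \<Rightarrow> ('x, 'v) sform \<Rightarrow> bool"
where
  "is_GAL base stay step conc \<longleftrightarrow>
     (\<forall>\<alpha> :: nat \<Rightarrow> ('x, 'v) assignment.
        conc (\<alpha> 0) \<longrightarrow>
        (\<forall>i. step (\<alpha> i) (\<alpha> (Suc i)) \<or> stay (\<alpha> i) (\<alpha> (Suc i))) \<longrightarrow>
        (\<forall>i. \<exists>j\<ge>i. step (\<alpha> j) (\<alpha> (Suc j))) \<longrightarrow>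
        (\<exists>k. base (\<alpha> k)))
   \<and> (\<forall>\<nu> \<nu>'. conc \<nu> \<longrightarrow> (step \<nu> \<nu>' \<or> stay \<nu> \<nu>') \<longrightarrow> conc \<nu>')"

text \<open>alpha[V |-> V'] for a state formula: evaluate it on the primed (second) assignment.\<close>
definition prime_form :: "('x, 'v) sform \<Rightarrow> ('x, 'v) tform" where
  "prime_form \<phi> = (\<lambda>\<nu>1 \<nu>2. \<phi> \<nu>2)"

end

theory Submission
  imports Defs
begin

text \<open>Along a run of the combined GAL, either step0 occurs infinitely often, and the first GAL
  yields base0 since every combined transition is a step0 or a stay0 transition; or eventually
  every step is a step1 taken outside base1. In that case the run is, from any such position on,
  a run of the second GAL started in conc1, so it reaches base1; the extra conjunct of stay then
  keeps base1 true forever, contradicting the infinitely many steps taken outside base1.\<close>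

lemma is_GALI:
  assumes "\<And>\<alpha>. conc (\<alpha> 0) \<Longrightarrow> \<forall>i. step (\<alpha> i) (\<alpha> (Suc i)) \<or> stay (\<alpha> i) (\<alpha> (Suc i)) \<Longrightarrow>
      \<exists>\<^sub>F i in sequentially. step (\<alpha> i) (\<alpha> (Suc i)) \<Longrightarrow> \<exists>k. base (\<alpha> k)"
    and "\<And>\<nu> \<nu>'. conc \<nu> \<Longrightarrow> step \<nu> \<nu>' \<or> stay \<nu> \<nu>' \<Longrightarrow> conc \<nu>'"
  shows "is_GAL base stay step conc"
  using assms unfolding is_GAL_def frequently_sequentially by blast

lemma is_GAL_reaches_base:
  assumes "is_GAL base stay step conc" and "conc (\<alpha> 0)"
    and "\<forall>i. step (\<alpha> i) (\<alpha> (Suc i)) \<or> stay (\<alpha> i) (\<alpha> (Suc i))"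
    and "\<exists>\<^sub>F i in sequentially. step (\<alpha> i) (\<alpha> (Suc i))"
  shows "\<exists>k. base (\<alpha> k)"
  using assms unfolding is_GAL_def frequently_sequentially by blast

lemma is_GAL_conc_invariant:
  assumes "is_GAL base stay step conc" and "conc \<nu>" and "step \<nu> \<nu>' \<or> stay \<nu> \<nu>'"
  shows "conc \<nu>'"
  using assms unfolding is_GAL_def by blast

lemma is_GAL_reaches_base_from:
  assumes "is_GAL base stay step conc" and "conc (\<alpha> j)"
    and "\<forall>i\<ge>j. step (\<alpha> i) (\<alpha> (Suc i)) \<or> stay (\<alpha> i) (\<alpha> (Suc i))"
    and "\<exists>\<^sub>F i in sequentially. step (\<alpha> i) (\<alpha> (Suc i))"
  shows "\<exists>k\<ge>j. base (\<alpha> k)"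
proof -
  have "\<exists>\<^sub>F i in sequentially. step (\<alpha> (i + j)) (\<alpha> (Suc i + j))"
    using assms(4) eventually_sequentially_seg[of "\<lambda>i. \<not> step (\<alpha> i) (\<alpha> (Suc i))" j]
    by (simp add: frequently_def)
  then have "\<exists>k. base (\<alpha> (k + j))"
    using is_GAL_reaches_base[where \<alpha> = "\<lambda>i. \<alpha> (i + j)"] assms(1-3) by simp
  then show ?thesis
    by (metis le_add2)
qed

lemma is_GAL_nonbase_steps_not_frequent:
  assumes gal: "is_GAL base stay step conc"
    and run: "\<forall>\<^sub>F i in sequentially.
      (conc (\<alpha> i) \<and> \<not> base (\<alpha> i) \<and> step (\<alpha> i) (\<alpha> (Suc i))) \<or>
      (stay (\<alpha> i) (\<alpha> (Suc i)) \<and> (base (\<alpha> i) \<longrightarrow> base (\<alpha> (Suc i))))"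
  shows "\<not> (\<exists>\<^sub>F i in sequentially. conc (\<alpha> i) \<and> \<not> base (\<alpha> i) \<and> step (\<alpha> i) (\<alpha> (Suc i)))"
    (is "\<not> (\<exists>\<^sub>F i in sequentially. ?escape i)")
proof
  assume escapes: "\<exists>\<^sub>F i in sequentially. ?escape i"
  from run obtain N where N: "\<And>i. i \<ge> N \<Longrightarrow>
      ?escape i \<or> (stay (\<alpha> i) (\<alpha> (Suc i)) \<and> (base (\<alpha> i) \<longrightarrow> base (\<alpha> (Suc i))))"
    unfolding eventually_sequentially by blast
  from escapes obtain j where "j \<ge> N" and "?escape j"
    unfolding frequently_sequentially by blast
  moreover have "\<exists>\<^sub>F i in sequentially. step (\<alpha> i) (\<alpha> (Suc i))"
    using escapes by (rule frequently_elim1) blast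
  ultimately obtain k where "k \<ge> N" and base_k: "base (\<alpha> k)"
    using is_GAL_reaches_base_from[OF gal] N by (metis order_trans)
  have base_forever: "base (\<alpha> m)" if "m \<ge> k" for m
    using that
  proof (induction m rule: dec_induct)
    case base
    show ?case
      by (rule base_k)
  next
    case (step m)
    with N[of m] \<open>k \<ge> N\<close> show ?case
      by auto
  qed
  from escapes obtain m where "m \<ge> k" and "\<not> base (\<alpha> m)"
    unfolding frequently_sequentially by blast
  with base_forever show False
    by blast
qed

theorem lemma3:
  fixes base0 conc0 base1 conc1 :: "('x::finite, 'v) sform"
    and stay0 step0 stay1 step1 :: "('x, 'v) tform"
  assumes "is_GAL base0 stay0 step0 conc0"
    and "is_GAL base1 stay1 step1 conc1"
  shows "is_GAL base0
           (\<lambda>\<nu>1 \<nu>2. stay0 \<nu>1 \<nu>2 \<and> stay1 \<nu>1 \<nu>2 \<and> (base1 \<nu>1 \<longrightarrow> prime_form base1 \<nu>1 \<nu>2))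
           (\<lambda>\<nu>1 \<nu>2. step0 \<nu>1 \<nu>2 \<or> (conc1 \<nu>1 \<and> \<not> base1 \<nu>1 \<and> step1 \<nu>1 \<nu>2 \<and> stay0 \<nu>1 \<nu>2))
           conc0"
proof (rule is_GALI)
  fix \<alpha> :: "nat \<Rightarrow> ('x, 'v) assignment"
  let ?escape = "\<lambda>i. conc1 (\<alpha> i) \<and> \<not> base1 (\<alpha> i) \<and> step1 (\<alpha> i) (\<alpha> (Suc i))"
  assume "conc0 (\<alpha> 0)"
    and run: "\<forall>i. (step0 (\<alpha> i) (\<alpha> (Suc i)) \<or> conc1 (\<alpha> i) \<and> \<not> base1 (\<alpha> i) \<and>
      step1 (\<alpha> i) (\<alpha> (Suc i)) \<and> stay0 (\<alpha> i) (\<alpha> (Suc i))) \<or>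
      stay0 (\<alpha> i) (\<alpha> (Suc i)) \<and> stay1 (\<alpha> i) (\<alpha> (Suc i)) \<and>
      (base1 (\<alpha> i) \<longrightarrow> prime_form base1 (\<alpha> i) (\<alpha> (Suc i)))"
    and steps: "\<exists>\<^sub>F i in sequentially. step0 (\<alpha> i) (\<alpha> (Suc i)) \<or> conc1 (\<alpha> i) \<and>
      \<not> base1 (\<alpha> i) \<and> step1 (\<alpha> i) (\<alpha> (Suc i)) \<and> stay0 (\<alpha> i) (\<alpha> (Suc i))"
  have "\<exists>\<^sub>F i in sequentially. step0 (\<alpha> i) (\<alpha> (Suc i))"
  proof (rule ccontr)
    assume "\<not> (\<exists>\<^sub>F i in sequentially. step0 (\<alpha> i) (\<alpha> (Suc i)))"
    then have no_step0: "\<forall>\<^sub>F i in sequentially. \<not> step0 (\<alpha> i) (\<alpha> (Suc i))"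
      by (simp add: not_frequently)
    have "\<forall>\<^sub>F i in sequentially. ?escape i \<or>
        (stay1 (\<alpha> i) (\<alpha> (Suc i)) \<and> (base1 (\<alpha> i) \<longrightarrow> base1 (\<alpha> (Suc i))))"
      using no_step0 by eventually_elim (use run in \<open>auto simp: prime_form_def\<close>)
    moreover have "\<exists>\<^sub>F i in sequentially. ?escape i"
      using steps no_step0 by (rule frequently_rev_mp[OF _ eventually_mono]) blast
    ultimately show False
      using is_GAL_nonbase_steps_not_frequent[OF assms(2)] by blast
  qed
  moreover have "\<forall>i. step0 (\<alpha> i) (\<alpha> (Suc i)) \<or> stay0 (\<alpha> i) (\<alpha> (Suc i))"
    using run by blast
  ultimately show "\<exists>k. base0 (\<alpha> k)"
    using is_GAL_reaches_base[OF assms(1), of \<alpha>] \<open>conc0 (\<alpha> 0)\<close> by blast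
qed (use is_GAL_conc_invariant[OF assms(1)] in blast)

end
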